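(* Let $\mathbb{D}=\{z\in\mathbb{C}:|z|<1\}$. For all $z_1,z_2\in\mathbb{D}$, \[ s_{\mathbb{D}}(z_1,z_2)\le \frac{|z_1-z_2|}{2-|z_1+z_2|}, \] and equality holds if and only if the points $z_1,0,z_2$ are collinear.
   Context: The triangular ratio metric of $\mathbb{D}$ is $s_{\mathbb{D}}(z_1,z_2)=\sup_{z\in\partial\mathbb{D}}\frac{|z_1-z_2|}{|z_1-z|+|z-z_2|}$. *)

theory Defs
  imports "HOL-Analysis.Analysis"
begin

definition s_disk :: "complex \<Rightarrow> complex \<Rightarrow> real" where
  "s_disk z1 z2 = (SUP z\<in>sphere 0 1. cmod (z1 - z2) / (cmod (z1 - z) + cmod (z - z2)))"

end

theory Submission
  imports Defs
begin

text \<open>For \<open>|z| = 1\<close> the triangle inequality gives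
  \<open>|z\<^sub>1 - z| + |z - z\<^sub>2| \<ge> |2z - (z\<^sub>1 + z\<^sub>2)| \<ge> 2 - |z\<^sub>1 + z\<^sub>2|\<close>, which bounds every quotient in the
  supremum. The supremum is attained on the compact circle, so equality holds iff some \<open>z\<close> is
  extremal in both triangle inequalities. By strict convexity of the Euclidean norm this means
  that \<open>z\<^sub>1 + z\<^sub>2\<close> is a nonnegative multiple of \<open>z\<close> and that \<open>z - z\<^sub>1\<close>, \<open>z - z\<^sub>2\<close> are positively
  parallel, which places \<open>z\<^sub>1\<close> and \<open>z\<^sub>2\<close> on the line through \<open>0\<close> and \<open>z\<close>; conversely, for collinear
  points the endpoint of the diameter through them lying on the side of \<open>z\<^sub>1 + z\<^sub>2\<close> is extremal.\<close>

lemma cSUP_eq_upper_bound_iff_attained: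
  fixes f :: "'a::topological_space \<Rightarrow> real"
  assumes "compact S" "S \<noteq> {}" "continuous_on S f" "\<And>x. x \<in> S \<Longrightarrow> f x \<le> B"
  shows "(SUP x\<in>S. f x) = B \<longleftrightarrow> (\<exists>x\<in>S. f x = B)"
proof -
  obtain x0 where "x0 \<in> S" and max: "\<And>x. x \<in> S \<Longrightarrow> f x \<le> f x0"
    using continuous_attains_sup[OF assms(1-3)] by blast
  then have "(SUP x\<in>S. f x) = f x0"
    by (intro antisym cSUP_least cSUP_upper bdd_aboveI2[of _ _ "f x0"]) (auto simp: assms(2))
  then show ?thesis
    using \<open>x0 \<in> S\<close> max assms(4) by (metis antisym)
qed

lemma two_minus_norm_add_le_dist_sum:
  fixes a b z :: "'a::real_normed_vector"
  assumes "norm z = 1"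
  shows "2 - norm (a + b) \<le> norm (a - z) + norm (z - b)"
proof -
  have "2 = norm ((z - a) + (z - b) + (a + b))"
    using assms by (simp add: algebra_simps flip: scaleR_2)
  also have "\<dots> \<le> norm (z - a) + norm (z - b) + norm (a + b)"
    by (meson norm_triangle_le norm_triangle_ineq add_right_mono)
  finally show ?thesis by (simp add: norm_minus_commute)
qed

lemma collinear_0_imp_scaleR_unit:
  fixes a b :: "'a::{real_normed_vector, perfect_space}"
  assumes "collinear {0, a, b}"
  obtains u s t where "norm u = 1" "a = s *\<^sub>R u" "b = t *\<^sub>R u"
proof -
  consider "a = 0" "b = 0" | "a \<noteq> 0" "\<exists>c. b = c *\<^sub>R a" | "a = 0" "b \<noteq> 0"
    using assms collinear_lemma by (metis scale_zero_left)
  then show thesis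
  proof cases
    case 1
    obtain u :: 'a where "norm u = 1" using vector_choose_size zero_le_one by blast
    with 1 show thesis using that[of u 0 0] by simp
  next
    case 2
    then obtain c where "b = c *\<^sub>R a" by blast
    with 2 show thesis
      using that[of "a /\<^sub>R norm a" "norm a" "c * norm a"] by simp
  next
    case 3
    then show thesis
      using that[of "b /\<^sub>R norm b" 0 "norm b"] by simp
  qed
qed

lemma dist_sum_eq_imp_collinear:
  fixes a b z :: "'a::real_inner"
  assumes "norm a < 1" "norm b < 1" "norm z = 1"
    and eq: "norm (a - z) + norm (z - b) = 2 - norm (a + b)"
  shows "collinear {0, a, b}"
proof -
  define r where "r = norm (a + b)"
  define \<alpha> where "\<alpha> = norm (z - a)"
  define \<beta> where "\<beta> = norm (z - b)"
  define d where "d = (z - a) + (z - b)"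
  have two: "norm (d + (a + b)) = 2"
    using assms(3) by (simp add: d_def algebra_simps flip: scaleR_2)
  have "norm (d + (a + b)) \<le> norm d + r" "norm d \<le> \<alpha> + \<beta>"
    unfolding d_def r_def \<alpha>_def \<beta>_def by (rule norm_triangle_ineq)+
  moreover have "\<alpha> + \<beta> + r = 2"
    using eq by (simp add: \<alpha>_def \<beta>_def r_def norm_minus_commute)
  ultimately have "norm ((z - a) + (z - b)) = \<alpha> + \<beta>"
    and "norm (d + (a + b)) = norm d + r" "norm d = 2 - r"
    using two unfolding d_def by linarith+
  then have parallel: "\<alpha> *\<^sub>R (z - b) = \<beta> *\<^sub>R (z - a)"
    and "(2 - r) *\<^sub>R (a + b) = r *\<^sub>R d"
    unfolding norm_triangle_eq \<alpha>_def \<beta>_def r_def by auto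
  then have "(a + b) + (a + b) = r *\<^sub>R z + r *\<^sub>R z"
    by (simp add: d_def algebra_simps scaleR_2)
  then have "a + b = r *\<^sub>R z"
    by (metis scaleR_2 scaleR_cancel_left zero_neq_numeral)
  then have a: "a = r *\<^sub>R z - b"
    by (simp add: eq_diff_eq)
  have "\<alpha> > 0" "\<beta> > 0"
    using assms(1-3) by (auto simp: \<alpha>_def \<beta>_def)
  have "(\<alpha> + \<beta>) *\<^sub>R b = (\<alpha> - \<beta> + \<beta> * r) *\<^sub>R z"
    using parallel unfolding a by (simp add: algebra_simps)
  then have "b = inverse (\<alpha> + \<beta>) *\<^sub>R ((\<alpha> - \<beta> + \<beta> * r) *\<^sub>R z)"
    using \<open>\<alpha> > 0\<close> \<open>\<beta> > 0\<close> by (metis add_pos_pos less_irrefl scaleR_one scaleR_scaleR left_inverse)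
  then have b: "b = ((\<alpha> - \<beta> + \<beta> * r) / (\<alpha> + \<beta>)) *\<^sub>R z"
    by (simp add: divide_inverse_commute)
  with a have "a = (r - (\<alpha> - \<beta> + \<beta> * r) / (\<alpha> + \<beta>)) *\<^sub>R z"
    by (simp add: scaleR_diff_left)
  with b show ?thesis
    by (simp add: collinear_scaleR_iff collinear_2)
qed

lemma collinear_0_imp_dist_sum_attained:
  fixes a b :: "'a::{real_normed_vector, perfect_space}"
  assumes "norm a < 1" "norm b < 1" "collinear {0, a, b}"
  obtains z where "norm z = 1" "norm (a - z) + norm (z - b) = 2 - norm (a + b)"
proof -
  obtain u s t where u: "norm u = 1" and a: "a = s *\<^sub>R u" and b: "b = t *\<^sub>R u"
    using collinear_0_imp_scaleR_unit[OF assms(3)] .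
  have "\<bar>s\<bar> < 1" "\<bar>t\<bar> < 1"
    using assms(1,2) u by (auto simp: a b)
  define \<sigma> :: real where "\<sigma> = (if s + t \<ge> 0 then 1 else -1)"
  have "norm (a - \<sigma> *\<^sub>R u) + norm (\<sigma> *\<^sub>R u - b) = \<bar>s - \<sigma>\<bar> + \<bar>\<sigma> - t\<bar>"
    using u by (simp add: a b flip: scaleR_diff_left)
  also have "\<dots> = 2 - \<bar>s + t\<bar>"
    using \<open>\<bar>s\<bar> < 1\<close> \<open>\<bar>t\<bar> < 1\<close> by (auto simp: \<sigma>_def)
  also have "\<dots> = 2 - norm (a + b)"
    using u by (simp add: a b flip: scaleR_add_left)
  finally show thesis
    using that[of "\<sigma> *\<^sub>R u"] u by (simp add: \<sigma>_def)
qed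

lemma ex_unit_dist_sum_eq_iff_collinear:
  fixes a b :: "'a::{real_inner, perfect_space}"
  assumes "norm a < 1" "norm b < 1"
  shows "(\<exists>z. norm z = 1 \<and> norm (a - z) + norm (z - b) = 2 - norm (a + b))
    \<longleftrightarrow> collinear {0, a, b}"
proof
  show "collinear {0, a, b}" if "\<exists>z. norm z = 1 \<and> norm (a - z) + norm (z - b) = 2 - norm (a + b)"
    using that assms dist_sum_eq_imp_collinear by blast
next
  show "\<exists>z. norm z = 1 \<and> norm (a - z) + norm (z - b) = 2 - norm (a + b)" if "collinear {0, a, b}"
    using collinear_0_imp_dist_sum_attained[OF assms that] by blast
qed

lemma dist_sum_to_unit_pos:
  fixes a b z :: "'a::real_normed_vector"
  assumes "norm a < 1" "norm b < 1" "norm z = 1"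
  shows "0 < 2 - norm (a + b)" "2 - norm (a + b) \<le> norm (a - z) + norm (z - b)"
  using assms norm_triangle_ineq[of a b] two_minus_norm_add_le_dist_sum[OF assms(3)] by auto

lemma norm_diff_div_dist_sum_le:
  fixes a b z :: "'a::real_normed_vector"
  assumes "norm a < 1" "norm b < 1" "norm z = 1"
  shows "norm (a - b) / (norm (a - z) + norm (z - b)) \<le> norm (a - b) / (2 - norm (a + b))"
  using dist_sum_to_unit_pos[OF assms] by (intro divide_left_mono) auto

lemma norm_diff_div_dist_sum_eq_iff:
  fixes a b z :: "'a::real_normed_vector"
  assumes "norm a < 1" "norm b < 1" "norm z = 1" "a \<noteq> b"
  shows "norm (a - b) / (norm (a - z) + norm (z - b)) = norm (a - b) / (2 - norm (a + b))
    \<longleftrightarrow> norm (a - z) + norm (z - b) = 2 - norm (a + b)"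
  using dist_sum_to_unit_pos[OF assms(1-3)] assms(4) by (auto simp: divide_simps)

theorem theorem2p2:
  fixes z1 z2 :: complex
  assumes "z1 \<in> ball 0 1" and "z2 \<in> ball 0 1"
  shows "s_disk z1 z2 \<le> cmod (z1 - z2) / (2 - cmod (z1 + z2))
    \<and> (s_disk z1 z2 = cmod (z1 - z2) / (2 - cmod (z1 + z2)) \<longleftrightarrow> collinear {z1, 0, z2})"
proof -
  have z1: "cmod z1 < 1" and z2: "cmod z2 < 1"
    using assms by auto
  define f where "f z = cmod (z1 - z2) / (cmod (z1 - z) + cmod (z - z2))" for z
  define B where "B = cmod (z1 - z2) / (2 - cmod (z1 + z2))"
  have le_B: "f z \<le> B" if "z \<in> sphere 0 1" for z
    using norm_diff_div_dist_sum_le[OF z1 z2] that by (simp add: f_def B_def)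
  have "cmod (z1 - z) + cmod (z - z2) \<noteq> 0" if "z \<in> sphere 0 1" for z
    using dist_sum_to_unit_pos[OF z1 z2, of z] that by simp
  then have "continuous_on (sphere 0 1) f"
    unfolding f_def by (intro continuous_intros) auto
  then have "s_disk z1 z2 = B \<longleftrightarrow> (\<exists>z\<in>sphere 0 1. f z = B)"
    unfolding s_disk_def f_def[symmetric]
    by (intro cSUP_eq_upper_bound_iff_attained[OF compact_sphere _ _ le_B]) auto
  also have "\<dots> \<longleftrightarrow> collinear {0, z1, z2}"
  proof (cases "z1 = z2")
    case False
    then show ?thesis
      using norm_diff_div_dist_sum_eq_iff[OF z1 z2] ex_unit_dist_sum_eq_iff_collinear[OF z1 z2]
      by (auto simp: f_def B_def)
  qed (auto simp: f_def B_def intro: exI[of _ 1])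
  moreover have "s_disk z1 z2 \<le> B"
    unfolding s_disk_def f_def[symmetric] using le_B by (intro cSUP_least) auto
  ultimately show ?thesis
    by (simp add: B_def insert_commute)
qed

end
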